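(* Let $p$ be a prime, $k \in \mathbb{N}$, and $G_1, \dots, G_k$ finite-dimensional vector spaces over $\mathbb{F}_p$. For $\varepsilon > 0$ set $b(\varepsilon) = (\varepsilon/1000)^{2^{2k+2}}$ and $n(\varepsilon) = \lceil 10 \varepsilon^{-2^{k+1}} \rceil$. Let $f \colon G_1 \times \cdots \times G_k \to \mathbb{D}$ and let $\mu_1, \dots, \mu_n \in \operatorname{Spec}^{\mathrm{ml}}_{\varepsilon}(f)$ be multilinear forms such that $\operatorname{bias}(\mu_i - \mu_j) \leq b(\varepsilon)$ for all $i \neq j$. Then $n < n(\varepsilon)$.
   Context: $\mathbb{D} = \{z \in \mathbb{C} : |z| \leq 1\}$, $\omega = e^{2\pi i/p}$, $\mathbb{E}$ is the uniform average. For a multilinear form $\beta$ on $G_1 \times \cdots \times G_k$, $\operatorname{bias}\beta = \mathbb{E}_{x_1 \in G_1, \dots, x_k \in G_k}\omega^{\beta(x_1, \dots, x_k)}$. The box norm of $g \colon G_1 \times \cdots \times G_k \to \mathbb{C}$ is given by $\|g\|_{\square^k}^{2^k} = \mathbb{E}_{x_1, y_1 \in G_1, \dots, x_k, y_k \in G_k} \prod_{I \subseteq [k]} \operatorname{Conj}^{|I|} g(x_I, y_{[k]\setminus I})$, where $(x_I, y_{[k]\setminus I})$ has $i$-th coordinate $x_i$ if $i \in I$ and $y_i$ otherwise, and $\operatorname{Conj}^j$ is complex conjugation applied $j$ times. $\operatorname{Spec}^{\mathrm{ml}}_{\varepsilon}(f) = \{\mu \text{ multilinear form } G_1 \times \cdots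 \times G_k \to \mathbb{F}_p : \|f\omega^{\mu}\|_{\square^k} \geq \varepsilon\}$. *)

theory Defs
  imports "HOL-Analysis.Analysis"
begin

text \<open>Coordinates: an \<open>F_p\<close>-vector space of dimension \<open>d\<close> is modelled as \<open>F_p^d\<close>,
  vectors being functions \<open>nat \<Rightarrow> int\<close> with entries in \<open>{0..<p}\<close> on \<open>{..<d}\<close>
  and zero elsewhere.  Field elements of \<open>F_p\<close> are integers in \<open>{0..<p}\<close>.\<close>

definition vec_sp :: "nat \<Rightarrow> nat \<Rightarrow> (nat \<Rightarrow> int) set" where
  "vec_sp p d = {v. (\<forall>j<d. 0 \<le> v j \<and> v j < int p) \<and> (\<forall>j\<ge>d. v j = 0)}"

definition vadd :: "nat \<Rightarrow> (nat \<Rightarrow> int) \<Rightarrow> (nat \<Rightarrow> int) \<Rightarrow> (nat \<Rightarrow> int)" where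
  "vadd p u v = (\<lambda>j. (u j + v j) mod int p)"

definition vsmul :: "nat \<Rightarrow> int \<Rightarrow> (nat \<Rightarrow> int) \<Rightarrow> (nat \<Rightarrow> int)" where
  "vsmul p a v = (\<lambda>j. (a * v j) mod int p)"

definition prod_sp :: "nat \<Rightarrow> nat \<Rightarrow> (nat \<Rightarrow> nat) \<Rightarrow> (nat \<Rightarrow> nat \<Rightarrow> int) set" where
  "prod_sp p k d = (\<Pi>\<^sub>E i\<in>{..<k}. vec_sp p (d i))"

text \<open>Multilinear forms \<open>G_1 \<times> \<dots> \<times> G_k \<rightarrow> F_p\<close> (only values on the product matter).\<close>
definition multilinear_form ::
  "nat \<Rightarrow> nat \<Rightarrow> (nat \<Rightarrow> nat) \<Rightarrow> ((nat \<Rightarrow> nat \<Rightarrow> int) \<Rightarrow> int) \<Rightarrow> bool" where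
  "multilinear_form p k d \<mu> \<longleftrightarrow>
     (\<forall>x\<in>prod_sp p k d. 0 \<le> \<mu> x \<and> \<mu> x < int p) \<and>
     (\<forall>x\<in>prod_sp p k d. \<forall>i<k. \<forall>u\<in>vec_sp p (d i). \<forall>v\<in>vec_sp p (d i). \<forall>a\<in>{0..<int p}.
        \<mu> (x(i := vadd p u (vsmul p a v))) = (\<mu> (x(i := u)) + a * \<mu> (x(i := v))) mod int p)"

definition omega_pow :: "nat \<Rightarrow> int \<Rightarrow> complex" where
  "omega_pow p t = cis (2 * pi * real_of_int t / real p)"

definition bias :: "nat \<Rightarrow> nat \<Rightarrow> (nat \<Rightarrow> nat) \<Rightarrow> ((nat \<Rightarrow> nat \<Rightarrow> int) \<Rightarrow> int) \<Rightarrow> complex" where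
  "bias p k d \<beta> = (\<Sum>x\<in>prod_sp p k d. omega_pow p (\<beta> x)) / of_nat (card (prod_sp p k d))"

definition form_diff :: "nat \<Rightarrow> ((nat \<Rightarrow> nat \<Rightarrow> int) \<Rightarrow> int) \<Rightarrow> ((nat \<Rightarrow> nat \<Rightarrow> int) \<Rightarrow> int)
    \<Rightarrow> ((nat \<Rightarrow> nat \<Rightarrow> int) \<Rightarrow> int)" where
  "form_diff p \<mu> \<nu> = (\<lambda>x. (\<mu> x - \<nu> x) mod int p)"

definition conj_pow :: "nat \<Rightarrow> complex \<Rightarrow> complex" where
  "conj_pow j z = (if even j then z else cnj z)"

definition box_norm :: "nat \<Rightarrow> nat \<Rightarrow> (nat \<Rightarrow> nat) \<Rightarrow> ((nat \<Rightarrow> nat \<Rightarrow> int) \<Rightarrow> complex) \<Rightarrow> real" where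
  "box_norm p k d g =
     root (2 ^ k) (cmod ((\<Sum>(x, y)\<in>prod_sp p k d \<times> prod_sp p k d.
        \<Prod>I\<in>Pow {..<k}. conj_pow (card I) (g (\<lambda>i. if i \<in> I then x i else y i)))
      / of_nat (card (prod_sp p k d \<times> prod_sp p k d))))"

definition spec_ml :: "nat \<Rightarrow> nat \<Rightarrow> (nat \<Rightarrow> nat) \<Rightarrow> real \<Rightarrow> ((nat \<Rightarrow> nat \<Rightarrow> int) \<Rightarrow> complex)
    \<Rightarrow> ((nat \<Rightarrow> nat \<Rightarrow> int) \<Rightarrow> int) set" where
  "spec_ml p k d \<epsilon> f = {\<mu>. multilinear_form p k d \<mu> \<and>
      box_norm p k d (\<lambda>x. f x * omega_pow p (\<mu> x)) \<ge> \<epsilon>}"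

end

(* Multilinearity of mu makes the alternating sum of mu over the 2^k vertices
   (x_I, y_{[k]-I}) of a box equal to mu(x - y).  Hence the 2^k-th power of the box
   norm of f omega^mu is the average over pairs (x, y) of a weight F(x, y), of modulus
   at most 1 and independent of mu, times the character Conj^k omega^(mu(x - y)).
   Substituting w = x - y shows that the characters of mu and nu correlate to
   |G|^2 bias(mu - nu), so pairwise low-bias spectral forms give almost orthogonal
   characters.  A Bessel-type inequality (Cauchy-Schwarz against a phase-weighted sum
   of the characters) yields n^2 eps^(2^(k+1)) <= n (n - 1) b(eps) + n, and
   b(eps) <= eps^(2^(k+1)) / 1000 then forces n < 10 eps^(-2^(k+1)). *)

theory Submission
  imports Defs
begin

lemma omega_pow_add: "omega_pow p (a + b) = omega_pow p a * omega_pow p b"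
  unfolding omega_pow_def by (simp add: cis_mult distrib_left add_divide_distrib)

lemma omega_pow_uminus: "omega_pow p (- a) = cnj (omega_pow p a)"
  unfolding omega_pow_def by (simp add: cis_cnj)

lemma norm_omega_pow [simp]: "cmod (omega_pow p a) = 1"
  unfolding omega_pow_def by simp

lemma omega_pow_mod:
  assumes "p > 0"
  shows "omega_pow p (a mod int p) = omega_pow p a"
proof -
  have "omega_pow p (int p * (a div int p)) = 1"
    using assms cis_multiple_2pi[of "real_of_int (a div int p)"]
    unfolding omega_pow_def by (simp add: mult.assoc)
  then have "omega_pow p a = omega_pow p (a mod int p)"
    by (metis mult_div_mod_eq mult.right_neutral omega_pow_add add.commute)
  then show ?thesis ..
qed

lemma omega_pow_mult_cnj [simp]: "omega_pow p a * cnj (omega_pow p a) = 1"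
  using complex_norm_square[of "omega_pow p a"] by simp

lemma conj_pow_mult: "conj_pow j (a * b) = conj_pow j a * conj_pow j b"
  unfolding conj_pow_def by simp

lemma conj_pow_cnj: "conj_pow j (cnj z) = cnj (conj_pow j z)"
  unfolding conj_pow_def by simp

lemma conj_pow_Suc: "conj_pow (Suc j) z = cnj (conj_pow j z)"
  unfolding conj_pow_def by simp

lemma conj_pow_prod: "conj_pow j (\<Prod>i\<in>A. g i) = (\<Prod>i\<in>A. conj_pow j (g i))"
  unfolding conj_pow_def by simp

lemma conj_pow_sum: "conj_pow j (\<Sum>i\<in>A. g i) = (\<Sum>i\<in>A. conj_pow j (g i))"
  unfolding conj_pow_def by simp

lemma norm_conj_pow [simp]: "cmod (conj_pow j z) = cmod z"
  unfolding conj_pow_def by simp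

lemma finite_vec_sp: "finite (vec_sp p d)"
proof (rule finite_subset)
  show "vec_sp p d
      \<subseteq> {v. \<forall>j. (j \<in> {..<d} \<longrightarrow> v j \<in> {0..<int p}) \<and> (j \<notin> {..<d} \<longrightarrow> v j = 0)}"
    unfolding vec_sp_def by auto
qed (rule finite_set_of_finite_funs; simp)

lemma finite_prod_sp: "finite (prod_sp p k d)"
  unfolding prod_sp_def by (rule finite_PiE) (auto simp: finite_vec_sp)

lemma prod_sp_nonempty:
  assumes "p > 0"
  shows "prod_sp p k d \<noteq> {}"
proof -
  have "(\<lambda>j. 0) \<in> vec_sp p (d i)" for i
    using assms unfolding vec_sp_def by simp
  then show ?thesis
    unfolding prod_sp_def PiE_eq_empty_iff by blast
qed

lemma mem_prod_sp_iff:
  "x \<in> prod_sp p k d \<longleftrightarrow> (\<forall>i<k. x i \<in> vec_sp p (d i)) \<and> (\<forall>i\<ge>k. x i = undefined)"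
  unfolding prod_sp_def PiE_def extensional_def by (auto simp: not_less)

lemma fun_upd_in_prod_sp:
  "x \<in> prod_sp p k d \<Longrightarrow> a < k \<Longrightarrow> v \<in> vec_sp p (d a) \<Longrightarrow> x(a := v) \<in> prod_sp p k d"
  unfolding mem_prod_sp_iff by auto

lemma cube_point_in_prod_sp:
  "x \<in> prod_sp p k d \<Longrightarrow> y \<in> prod_sp p k d \<Longrightarrow> I \<subseteq> {..<k} \<Longrightarrow>
    (\<lambda>i. if i \<in> I then x i else y i) \<in> prod_sp p k d"
  unfolding mem_prod_sp_iff by auto

lemma mod_vec_sp: "v \<in> vec_sp p d \<Longrightarrow> v j mod int p = v j"
  unfolding vec_sp_def by (cases "j < d") auto

definition vsub :: "nat \<Rightarrow> (nat \<Rightarrow> int) \<Rightarrow> (nat \<Rightarrow> int) \<Rightarrow> (nat \<Rightarrow> int)" where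
  "vsub p u v = (\<lambda>j. (u j - v j) mod int p)"

lemma vsub_in_vec_sp:
  "p > 0 \<Longrightarrow> u \<in> vec_sp p d \<Longrightarrow> v \<in> vec_sp p d \<Longrightarrow> vsub p u v \<in> vec_sp p d"
  unfolding vec_sp_def vsub_def by auto

lemma vadd_vsub_cancel:
  assumes "u \<in> vec_sp p d"
  shows "vadd p (vsub p u v) (vsmul p 1 v) = u"
proof
  fix j
  have "vadd p (vsub p u v) (vsmul p 1 v) j = u j mod int p"
    unfolding vadd_def vsub_def vsmul_def by (simp add: mod_simps)
  then show "vadd p (vsub p u v) (vsmul p 1 v) j = u j"
    using mod_vec_sp[OF assms] by simp
qed

lemma vsub_right_cancel:
  assumes "u \<in> vec_sp p d" "v \<in> vec_sp p d" "vsub p u w = vsub p v w"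
  shows "u = v"
proof
  fix j
  have "(u j - w j) mod int p = (v j - w j) mod int p"
    using assms(3) unfolding vsub_def by meson
  then have "(u j - w j + w j) mod int p = (v j - w j + w j) mod int p"
    by (rule mod_add_cong) simp
  then show "u j = v j"
    using mod_vec_sp[OF assms(1)] mod_vec_sp[OF assms(2)] by simp
qed

definition psub ::
  "nat \<Rightarrow> nat \<Rightarrow> (nat \<Rightarrow> nat \<Rightarrow> int) \<Rightarrow> (nat \<Rightarrow> nat \<Rightarrow> int) \<Rightarrow> (nat \<Rightarrow> nat \<Rightarrow> int)" where
  "psub p k x y = (\<lambda>i. if i < k then vsub p (x i) (y i) else undefined)"

lemma psub_in_prod_sp:
  "p > 0 \<Longrightarrow> x \<in> prod_sp p k d \<Longrightarrow> y \<in> prod_sp p k d \<Longrightarrow> psub p k x y \<in> prod_sp p k d"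
  unfolding mem_prod_sp_iff psub_def by (auto intro: vsub_in_vec_sp)

lemma sum_psub_translate:
  assumes "p > 0" "y \<in> prod_sp p k d"
  shows "(\<Sum>x\<in>prod_sp p k d. h (psub p k x y)) = (\<Sum>w\<in>prod_sp p k d. h w)"
proof -
  let ?P = "prod_sp p k d"
  have inj: "inj_on (\<lambda>x. psub p k x y) ?P"
  proof (rule inj_onI)
    fix x x' assume x: "x \<in> ?P" and x': "x' \<in> ?P" and eq: "psub p k x y = psub p k x' y"
    show "x = x'"
    proof
      fix i
      show "x i = x' i"
      proof (cases "i < k")
        case True
        then have "vsub p (x i) (y i) = vsub p (x' i) (y i)"
          using fun_cong[OF eq, of i] unfolding psub_def by simp
        with True x x' show ?thesis
          unfolding mem_prod_sp_iff by (auto intro: vsub_right_cancel)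
      qed (use x x' in \<open>simp add: mem_prod_sp_iff\<close>)
    qed
  qed
  have "(\<lambda>x. psub p k x y) ` ?P = ?P"
    by (rule endo_inj_surj[OF finite_prod_sp _ inj]) (use assms in \<open>auto intro: psub_in_prod_sp\<close>)
  then show ?thesis
    using sum.reindex[OF inj, of h] by simp
qed

lemma multilinear_formD:
  assumes "multilinear_form p k d \<mu>" and "x \<in> prod_sp p k d" and "i < k"
    and "u \<in> vec_sp p (d i)" and "v \<in> vec_sp p (d i)" and "0 \<le> a" and "a < int p"
  shows "\<mu> (x(i := vadd p u (vsmul p a v))) = (\<mu> (x(i := u)) + a * \<mu> (x(i := v))) mod int p"
  using assms unfolding multilinear_form_def by auto

lemma omega_pow_multilinear_diff:
  assumes ml: "multilinear_form p k d \<nu>" and p: "p > 1"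
    and z: "z \<in> prod_sp p k d" and a: "a < k"
    and u: "u \<in> vec_sp p (d a)" and v: "v \<in> vec_sp p (d a)"
  shows "omega_pow p (\<nu> (z(a := vsub p u v)))
       = omega_pow p (\<nu> (z(a := u))) * cnj (omega_pow p (\<nu> (z(a := v))))"
proof -
  have "\<nu> (z(a := vadd p (vsub p u v) (vsmul p 1 v)))
      = (\<nu> (z(a := vsub p u v)) + 1 * \<nu> (z(a := v))) mod int p"
    using multilinear_formD[OF ml z a vsub_in_vec_sp[of p u "d a" v] v, of 1] p u v by simp
  then have "omega_pow p (\<nu> (z(a := u)))
      = omega_pow p (\<nu> (z(a := vsub p u v))) * omega_pow p (\<nu> (z(a := v)))"
    using p by (simp add: vadd_vsub_cancel[OF u] omega_pow_mod omega_pow_add)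
  then show ?thesis
    by (simp add: mult.assoc)
qed

lemma prod_Pow_insert:
  assumes "finite S" and "a \<notin> S"
  shows "(\<Prod>I\<in>Pow (insert a S). g I) = (\<Prod>I\<in>Pow S. g I) * (\<Prod>I\<in>Pow S. g (insert a I))"
proof -
  have "inj_on (insert a) (Pow S)"
    using assms(2) by (auto simp: inj_on_def)
  then have "(\<Prod>I\<in>insert a ` Pow S. g I) = (\<Prod>I\<in>Pow S. g (insert a I))"
    by (simp only: prod.reindex comp_def)
  moreover have "(\<Prod>I\<in>Pow S \<union> insert a ` Pow S. g I) = (\<Prod>I\<in>Pow S. g I) * (\<Prod>I\<in>insert a ` Pow S. g I)"
    by (rule prod.union_disjoint) (use assms in auto)
  ultimately show ?thesis
    by (simp only: Pow_insert)
qed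

lemma omega_pow_multilinear_alternating:
  assumes ml: "multilinear_form p k d \<nu>" and p: "p > 1"
    and x: "x \<in> prod_sp p k d" and y: "y \<in> prod_sp p k d"
    and S: "S \<subseteq> {..<k}" and z: "z \<in> prod_sp p k d"
  shows "(\<Prod>I\<in>Pow S. conj_pow (card (S - I))
            (omega_pow p (\<nu> (\<lambda>i. if i \<in> I then x i else if i \<in> S then y i else z i))))
       = omega_pow p (\<nu> (\<lambda>i. if i \<in> S then vsub p (x i) (y i) else z i))"
proof -
  have "finite S"
    using S finite_subset by blast
  from this S z show ?thesis
  proof (induction S arbitrary: z rule: finite_induct)
    case empty
    then show ?case
      by (simp add: conj_pow_def)
  next
    case (insert a S)
    let ?\<chi> = "\<lambda>w. omega_pow p (\<nu> w)"
    let ?cube = "\<lambda>S z I. \<lambda>i. if i \<in> I then x i else if i \<in> S then y i else z i"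
    let ?W = "\<lambda>i. if i \<in> S then vsub p (x i) (y i) else z i"
    have a: "a < k" and S: "S \<subseteq> {..<k}"
      using insert.prems by auto
    have xa: "x a \<in> vec_sp p (d a)" and ya: "y a \<in> vec_sp p (d a)"
      using x y a unfolding mem_prod_sp_iff by auto
    have W: "?W \<in> prod_sp p k d"
      using x y insert.prems p S unfolding mem_prod_sp_iff by (auto intro: vsub_in_vec_sp)
    have IH: "(\<Prod>I\<in>Pow S. conj_pow (card (S - I)) (?\<chi> (?cube S (z(a := w)) I))) = ?\<chi> (?W(a := w))"
      if "w \<in> vec_sp p (d a)" for w
    proof -
      have "(\<lambda>i. if i \<in> S then vsub p (x i) (y i) else (z(a := w)) i) = ?W(a := w)"
        using insert.hyps by auto
      then show ?thesis
        using insert.IH[OF S fun_upd_in_prod_sp[OF insert.prems(2) a that]] by simp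
    qed
    let ?t = "\<lambda>I. conj_pow (card (insert a S - I)) (?\<chi> (?cube (insert a S) z I))"
    have face_y: "?t I = cnj (conj_pow (card (S - I)) (?\<chi> (?cube S (z(a := y a)) I)))"
      and face_x: "?t (insert a I) = conj_pow (card (S - I)) (?\<chi> (?cube S (z(a := x a)) I))"
      if "I \<in> Pow S" for I
    proof -
      have "card (insert a S - I) = Suc (card (S - I))" and "insert a S - insert a I = S - I"
        using that insert.hyps by (auto simp: insert_Diff_if)
      moreover have "?cube (insert a S) z I = ?cube S (z(a := y a)) I"
        and "?cube (insert a S) z (insert a I) = ?cube S (z(a := x a)) I"
        using that insert.hyps by auto
      ultimately show "?t I = cnj (conj_pow (card (S - I)) (?\<chi> (?cube S (z(a := y a)) I)))"
        and "?t (insert a I) = conj_pow (card (S - I)) (?\<chi> (?cube S (z(a := x a)) I))"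
        by (simp_all add: conj_pow_Suc)
    qed
    have "(\<Prod>I\<in>Pow S. ?t I) = cnj (?\<chi> (?W(a := y a)))"
      unfolding IH[OF ya, symmetric] cnj_prod by (rule prod.cong[OF refl]) (rule face_y)
    moreover have "(\<Prod>I\<in>Pow S. ?t (insert a I)) = ?\<chi> (?W(a := x a))"
      unfolding IH[OF xa, symmetric] by (rule prod.cong[OF refl]) (rule face_x)
    ultimately have "(\<Prod>I\<in>Pow (insert a S). ?t I) = cnj (?\<chi> (?W(a := y a))) * ?\<chi> (?W(a := x a))"
      by (simp only: prod_Pow_insert[OF insert.hyps])
    also have "\<dots> = ?\<chi> (?W(a := vsub p (x a) (y a)))"
      using omega_pow_multilinear_diff[OF ml p W a xa ya] by (simp add: mult.commute)
    also have "?W(a := vsub p (x a) (y a)) = (\<lambda>i. if i \<in> insert a S then vsub p (x i) (y i) else z i)"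
      by auto
    finally show ?case .
  qed
qed

lemma omega_pow_multilinear_cube:
  assumes ml: "multilinear_form p k d \<nu>" and p: "p > 1"
    and x: "x \<in> prod_sp p k d" and y: "y \<in> prod_sp p k d"
  shows "(\<Prod>I\<in>Pow {..<k}. conj_pow (card I) (omega_pow p (\<nu> (\<lambda>i. if i \<in> I then x i else y i))))
       = conj_pow k (omega_pow p (\<nu> (psub p k x y)))"
proof -
  have conj: "conj_pow (card I) w = conj_pow k (conj_pow (card ({..<k} - I)) w)"
    if "I \<in> Pow {..<k}" for I w
  proof -
    define c where "c = card ({..<k} - I)"
    have "k = card I + c"
      using that card_mono[of "{..<k}" I] unfolding c_def by (simp add: card_Diff_subset finite_subset)
    then show ?thesis
      unfolding c_def[symmetric] by (auto simp: conj_pow_def)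
  qed
  have cube: "(\<lambda>i. if i \<in> I then x i else if i \<in> {..<k} then y i else y i)
      = (\<lambda>i. if i \<in> I then x i else y i)" for I
    by auto
  have diff: "(\<lambda>i. if i \<in> {..<k} then vsub p (x i) (y i) else y i) = psub p k x y"
    using y unfolding psub_def mem_prod_sp_iff by auto
  note alternating = omega_pow_multilinear_alternating[OF ml p x y order.refl y, unfolded cube diff]
  have "(\<Prod>I\<in>Pow {..<k}. conj_pow (card I) (omega_pow p (\<nu> (\<lambda>i. if i \<in> I then x i else y i))))
      = (\<Prod>I\<in>Pow {..<k}. conj_pow k (conj_pow (card ({..<k} - I))
          (omega_pow p (\<nu> (\<lambda>i. if i \<in> I then x i else y i)))))"
    by (rule prod.cong[OF refl]) (rule conj)
  also have "\<dots> = conj_pow k (omega_pow p (\<nu> (psub p k x y)))"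
    unfolding conj_pow_prod[symmetric] alternating ..
  finally show ?thesis .
qed

definition box_integrand ::
  "nat \<Rightarrow> ((nat \<Rightarrow> nat \<Rightarrow> int) \<Rightarrow> complex)
    \<Rightarrow> (nat \<Rightarrow> nat \<Rightarrow> int) \<Rightarrow> (nat \<Rightarrow> nat \<Rightarrow> int) \<Rightarrow> complex"
  where "box_integrand k g x y = (\<Prod>I\<in>Pow {..<k}. conj_pow (card I) (g (\<lambda>i. if i \<in> I then x i else y i)))"

lemma box_norm_eq:
  "box_norm p k d g = root (2 ^ k) (cmod (\<Sum>(x, y)\<in>prod_sp p k d \<times> prod_sp p k d. box_integrand k g x y)
     / real (card (prod_sp p k d \<times> prod_sp p k d)))"
  unfolding box_norm_def box_integrand_def norm_divide by simp

lemma box_norm_pow: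
  "box_norm p k d g ^ 2 ^ k = cmod (\<Sum>(x, y)\<in>prod_sp p k d \<times> prod_sp p k d. box_integrand k g x y)
     / real (card (prod_sp p k d \<times> prod_sp p k d))"
  unfolding box_norm_eq by simp

lemma norm_box_integrand_le_1:
  assumes "\<forall>z\<in>prod_sp p k d. cmod (g z) \<le> 1"
    and "x \<in> prod_sp p k d" and "y \<in> prod_sp p k d"
  shows "cmod (box_integrand k g x y) \<le> 1"
  unfolding box_integrand_def prod_norm[symmetric] norm_conj_pow
  by (rule prod_le_1) (use assms cube_point_in_prod_sp in auto)

lemma box_norm_le_1:
  assumes "\<forall>z\<in>prod_sp p k d. cmod (g z) \<le> 1"
  shows "box_norm p k d g \<le> 1"
proof -
  let ?Q = "prod_sp p k d \<times> prod_sp p k d"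
  have "cmod (\<Sum>(x, y)\<in>?Q. box_integrand k g x y) \<le> (\<Sum>(x, y)\<in>?Q. 1)"
    by (rule sum_norm_le) (use norm_box_integrand_le_1[OF assms] in auto)
  then show ?thesis
    unfolding box_norm_eq by (cases "card ?Q = 0") (auto simp: divide_le_eq_1)
qed

lemma box_integrand_mult_omega_pow:
  assumes "multilinear_form p k d \<mu>" and "p > 1"
    and "x \<in> prod_sp p k d" and "y \<in> prod_sp p k d"
  shows "box_integrand k (\<lambda>z. g z * omega_pow p (\<mu> z)) x y
       = box_integrand k g x y * conj_pow k (omega_pow p (\<mu> (psub p k x y)))"
  unfolding box_integrand_def conj_pow_mult prod.distrib omega_pow_multilinear_cube[OF assms] ..

lemma norm_sum_character_correlation:
  assumes p: "p > 1"
  shows "cmod (\<Sum>(x, y)\<in>prod_sp p k d \<times> prod_sp p k d.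
            conj_pow k (omega_pow p (\<mu> (psub p k x y))) * cnj (conj_pow k (omega_pow p (\<nu> (psub p k x y)))))
       = real (card (prod_sp p k d)) * real (card (prod_sp p k d)) * cmod (bias p k d (form_diff p \<mu> \<nu>))"
proof -
  let ?P = "prod_sp p k d"
  let ?\<chi> = "\<lambda>w. conj_pow k (omega_pow p (form_diff p \<mu> \<nu> w))"
  have character: "conj_pow k (omega_pow p (\<mu> w)) * cnj (conj_pow k (omega_pow p (\<nu> w))) = ?\<chi> w" for w
  proof -
    have "omega_pow p (\<mu> w) * cnj (omega_pow p (\<nu> w)) = omega_pow p (\<mu> w - \<nu> w)"
      by (simp add: omega_pow_uminus[symmetric] omega_pow_add[symmetric])
    also have "\<dots> = omega_pow p (form_diff p \<mu> \<nu> w)"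
      unfolding form_diff_def using p by (simp add: omega_pow_mod)
    finally show ?thesis
      by (simp add: conj_pow_cnj[symmetric] conj_pow_mult[symmetric])
  qed
  have "(\<Sum>(x, y)\<in>?P \<times> ?P. conj_pow k (omega_pow p (\<mu> (psub p k x y)))
          * cnj (conj_pow k (omega_pow p (\<nu> (psub p k x y)))))
      = (\<Sum>y\<in>?P. \<Sum>x\<in>?P. ?\<chi> (psub p k x y))"
    unfolding character sum.cartesian_product[symmetric] by (rule sum.swap)
  also have "\<dots> = (\<Sum>y\<in>?P. \<Sum>w\<in>?P. ?\<chi> w)"
    using p by (intro sum.cong refl sum_psub_translate) auto
  also have "\<dots> = of_nat (card ?P) * conj_pow k (of_nat (card ?P) * bias p k d (form_diff p \<mu> \<nu>))"
    using p finite_prod_sp prod_sp_nonempty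
    by (simp add: bias_def conj_pow_sum[symmetric] card_gt_0_iff)
  finally show ?thesis
    by (simp add: norm_mult)
qed

lemma cnj_sgn_mult_self: "cnj (sgn z) * z = complex_of_real (cmod z)"
proof (cases "z = 0")
  case False
  have "cnj (sgn z) * z = (z * cnj z) / complex_of_real (cmod z)"
    by (simp add: sgn_eq)
  also have "\<dots> = complex_of_real (cmod z)"
    using False by (simp add: complex_norm_square[symmetric] power2_eq_square)
  finally show ?thesis .
qed simp

lemma sum_norm_correlations_squared_le:
  fixes F :: "'z \<Rightarrow> complex" and e :: "'i \<Rightarrow> 'z \<Rightarrow> complex"
  assumes F: "\<forall>z\<in>P. cmod (F z) \<le> 1"
  shows "(\<Sum>i\<in>J. cmod (\<Sum>z\<in>P. F z * e i z))\<^sup>2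
       \<le> card P * (\<Sum>i\<in>J. \<Sum>j\<in>J. cmod (\<Sum>z\<in>P. e i z * cnj (e j z)))"
proof -
  define S where "S i = (\<Sum>z\<in>P. F z * e i z)" for i
  define c where "c i = cnj (sgn (S i))" for i
  define G where "G z = (\<Sum>i\<in>J. c i * e i z)" for z
  \<comment> \<open>The phases make \<open>\<Sum>i\<in>J. cmod (S i)\<close> the correlation of \<open>F\<close> with \<open>G\<close>;
    then Cauchy-Schwarz, and expand \<open>cmod (G z)\<^sup>2\<close>.\<close>
  have c: "cmod (c i) \<le> 1" for i
    unfolding c_def by (simp add: norm_sgn)
  have "complex_of_real (\<Sum>i\<in>J. cmod (S i)) = (\<Sum>i\<in>J. c i * S i)"
    by (simp add: c_def cnj_sgn_mult_self)
  also have "\<dots> = (\<Sum>i\<in>J. \<Sum>z\<in>P. c i * (F z * e i z))"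
    by (simp add: S_def sum_distrib_left)
  also have "\<dots> = (\<Sum>z\<in>P. F z * G z)"
    unfolding G_def sum_distrib_left by (subst sum.swap) (simp add: mult.left_commute)
  finally have sum_S_eq: "complex_of_real (\<Sum>i\<in>J. cmod (S i)) = (\<Sum>z\<in>P. F z * G z)" .
  have "(\<Sum>i\<in>J. cmod (S i)) = cmod (complex_of_real (\<Sum>i\<in>J. cmod (S i)))"
    unfolding norm_of_real by (rule abs_of_nonneg[symmetric]) (simp add: sum_nonneg)
  also have "\<dots> = cmod (\<Sum>z\<in>P. F z * G z)"
    by (simp only: sum_S_eq)
  also have "\<dots> \<le> (\<Sum>z\<in>P. cmod (F z * G z))"
    by (rule norm_sum)
  also have "\<dots> \<le> (\<Sum>z\<in>P. cmod (G z))"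
    using F by (intro sum_mono) (simp add: norm_mult mult_left_le_one_le)
  finally have sum_S: "(\<Sum>i\<in>J. cmod (S i)) \<le> (\<Sum>z\<in>P. cmod (G z))" .
  have "complex_of_real ((cmod (G z))\<^sup>2)
      = (\<Sum>i\<in>J. \<Sum>j\<in>J. c i * cnj (c j) * (e i z * cnj (e j z)))" for z
    unfolding complex_norm_square G_def cnj_sum sum_product by (simp add: mult_ac)
  then have "complex_of_real (\<Sum>z\<in>P. (cmod (G z))\<^sup>2)
      = (\<Sum>z\<in>P. \<Sum>i\<in>J. \<Sum>j\<in>J. c i * cnj (c j) * (e i z * cnj (e j z)))"
    by (simp add: of_real_sum)
  also have "\<dots> = (\<Sum>i\<in>J. \<Sum>z\<in>P. \<Sum>j\<in>J. c i * cnj (c j) * (e i z * cnj (e j z)))"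
    by (rule sum.swap)
  also have "\<dots> = (\<Sum>i\<in>J. \<Sum>j\<in>J. \<Sum>z\<in>P. c i * cnj (c j) * (e i z * cnj (e j z)))"
    by (rule sum.cong[OF refl], rule sum.swap)
  also have "\<dots> = (\<Sum>i\<in>J. \<Sum>j\<in>J. c i * cnj (c j) * (\<Sum>z\<in>P. e i z * cnj (e j z)))"
    by (simp add: sum_distrib_left)
  finally have sum_G_sq_eq: "complex_of_real (\<Sum>z\<in>P. (cmod (G z))\<^sup>2)
      = (\<Sum>i\<in>J. \<Sum>j\<in>J. c i * cnj (c j) * (\<Sum>z\<in>P. e i z * cnj (e j z)))" .
  have "(\<Sum>z\<in>P. (cmod (G z))\<^sup>2) = cmod (complex_of_real (\<Sum>z\<in>P. (cmod (G z))\<^sup>2))"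
    unfolding norm_of_real by (rule abs_of_nonneg[symmetric]) (simp add: sum_nonneg)
  also have "\<dots> = cmod (\<Sum>i\<in>J. \<Sum>j\<in>J. c i * cnj (c j) * (\<Sum>z\<in>P. e i z * cnj (e j z)))"
    by (simp only: sum_G_sq_eq)
  also have "\<dots> \<le> (\<Sum>i\<in>J. \<Sum>j\<in>J. cmod (c i * cnj (c j) * (\<Sum>z\<in>P. e i z * cnj (e j z))))"
    by (rule order.trans[OF norm_sum sum_mono[OF norm_sum]])
  also have "\<dots> \<le> (\<Sum>i\<in>J. \<Sum>j\<in>J. cmod (\<Sum>z\<in>P. e i z * cnj (e j z)))"
    using c by (intro sum_mono) (simp add: norm_mult mult_le_one mult_left_le_one_le)
  finally have sum_G_sq:
    "(\<Sum>z\<in>P. (cmod (G z))\<^sup>2) \<le> (\<Sum>i\<in>J. \<Sum>j\<in>J. cmod (\<Sum>z\<in>P. e i z * cnj (e j z)))" .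
  have "(\<Sum>i\<in>J. cmod (S i))\<^sup>2 \<le> (\<Sum>z\<in>P. cmod (G z))\<^sup>2"
    by (rule power_mono[OF sum_S]) (simp add: sum_nonneg)
  also have "\<dots> \<le> (\<Sum>z\<in>P. (cmod (G z))\<^sup>2) * card P"
    by (rule sum_squared_le_sum_of_squares)
  also have "\<dots> \<le> card P * (\<Sum>i\<in>J. \<Sum>j\<in>J. cmod (\<Sum>z\<in>P. e i z * cnj (e j z)))"
    using sum_G_sq by (simp add: mult.commute mult_left_mono)
  finally show ?thesis
    unfolding S_def .
qed

lemma spec_ml_correlation_ge:
  assumes \<mu>: "\<mu> \<in> spec_ml p k d \<epsilon> f" and p: "p > 1" and "\<epsilon> \<ge> 0"
  shows "\<epsilon> ^ 2 ^ k * card (prod_sp p k d \<times> prod_sp p k d)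
       \<le> cmod (\<Sum>(x, y)\<in>prod_sp p k d \<times> prod_sp p k d.
            box_integrand k f x y * conj_pow k (omega_pow p (\<mu> (psub p k x y))))"
proof -
  let ?Q = "prod_sp p k d \<times> prod_sp p k d"
  have ml: "multilinear_form p k d \<mu>"
    and ge: "\<epsilon> \<le> box_norm p k d (\<lambda>x. f x * omega_pow p (\<mu> x))"
    using \<mu> unfolding spec_ml_def by auto
  have "card ?Q > 0"
    using p finite_prod_sp prod_sp_nonempty by (simp add: card_gt_0_iff)
  moreover have "\<epsilon> ^ 2 ^ k \<le> box_norm p k d (\<lambda>x. f x * omega_pow p (\<mu> x)) ^ 2 ^ k"
    using ge assms(3) by (rule power_mono)
  moreover have "(\<Sum>(x, y)\<in>?Q. box_integrand k (\<lambda>x. f x * omega_pow p (\<mu> x)) x y)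
      = (\<Sum>(x, y)\<in>?Q. box_integrand k f x y * conj_pow k (omega_pow p (\<mu> (psub p k x y))))"
    using box_integrand_mult_omega_pow[OF ml p] by (intro sum.cong) auto
  ultimately show ?thesis
    unfolding box_norm_pow by (simp add: pos_le_divide_eq)
qed

lemma sum_if_eq_lessThan:
  fixes b :: real
  assumes "i < n"
  shows "(\<Sum>j<n. if i = j then 1 else b) = (real n - 1) * b + 1"
proof -
  have "(\<Sum>j<n. if i = j then 1 else b) = (\<Sum>j<n. b + (if i = j then 1 - b else 0))"
    by (intro sum.cong) auto
  also have "\<dots> = real n * b + (1 - b)"
    using assms by (simp add: sum.distrib)
  finally show ?thesis
    by (simp add: algebra_simps)
qed

lemma spec_ml_almost_orthogonal_count_bound:
  assumes p: "p > 1" and "\<epsilon> \<ge> 0"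
    and f: "\<forall>x\<in>prod_sp p k d. cmod (f x) \<le> 1"
    and \<mu>: "\<forall>i<n. \<mu> i \<in> spec_ml p k d \<epsilon> f"
    and bias: "\<forall>i<n. \<forall>j<n. i \<noteq> j \<longrightarrow> cmod (bias p k d (form_diff p (\<mu> i) (\<mu> j))) \<le> b"
  shows "real n ^ 2 * \<epsilon> ^ 2 ^ (k + 1) \<le> real n * (real n - 1) * b + real n"
proof -
  let ?P = "prod_sp p k d"
  let ?Q = "?P \<times> ?P"
  define M where "M = real (card ?Q)"
  define F where "F = (\<lambda>(x, y). box_integrand k f x y)"
  define e where "e i = (\<lambda>(x, y). conj_pow k (omega_pow p (\<mu> i (psub p k x y))))" for i
  have M: "M > 0" "M = real (card ?P) * real (card ?P)"
    using p finite_prod_sp prod_sp_nonempty unfolding M_def by (auto simp: card_gt_0_iff card_cartesian_product)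
  have "real n * (\<epsilon> ^ 2 ^ k * M) \<le> (\<Sum>i<n. cmod (\<Sum>z\<in>?Q. F z * e i z))"
    using sum_mono[of "{..<n}" "\<lambda>_. \<epsilon> ^ 2 ^ k * M"] spec_ml_correlation_ge[OF _ p assms(2)] \<mu>
    unfolding M_def F_def e_def by (simp add: case_prod_unfold)
  then have "(real n * (\<epsilon> ^ 2 ^ k * M))\<^sup>2 \<le> (\<Sum>i<n. cmod (\<Sum>z\<in>?Q. F z * e i z))\<^sup>2"
    using M assms(2) by (intro power_mono) auto
  also have "\<dots> \<le> M * (\<Sum>i<n. \<Sum>j<n. cmod (\<Sum>z\<in>?Q. e i z * cnj (e j z)))"
    unfolding M_def
    by (rule sum_norm_correlations_squared_le) (use f norm_box_integrand_le_1 in \<open>auto simp: F_def\<close>)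
  also have "\<dots> \<le> M * (\<Sum>i<n. \<Sum>j<n. M * (if i = j then 1 else b))"
  proof (intro mult_left_mono sum_mono)
    fix i j assume "i \<in> {..<n}" "j \<in> {..<n}"
    then show "cmod (\<Sum>z\<in>?Q. e i z * cnj (e j z)) \<le> M * (if i = j then 1 else b)"
      using bias norm_sum_character_correlation[OF p, where \<mu> = "\<mu> i" and \<nu> = "\<mu> j"] M
      by (auto simp: e_def case_prod_unfold form_diff_def bias_def)
  qed (use M in auto)
  also have "\<dots> = M\<^sup>2 * (real n * (real n - 1) * b + real n)"
    by (simp add: sum_distrib_left[symmetric] sum_if_eq_lessThan power2_eq_square algebra_simps)
  also have "(real n * (\<epsilon> ^ 2 ^ k * M))\<^sup>2 = M\<^sup>2 * (real n ^ 2 * \<epsilon> ^ 2 ^ (k + 1))"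
    by (simp add: power_mult_distrib power_mult[symmetric] mult.commute)
  finally show ?thesis
    using M(1) by (simp add: mult_le_cancel_left_pos)
qed

lemma power_div_1000_le:
  fixes \<epsilon> :: real
  assumes "0 < \<epsilon>" and "\<epsilon> \<le> 1"
  shows "(\<epsilon> / 1000) ^ 2 ^ (2 * k + 2) \<le> \<epsilon> ^ 2 ^ (k + 1) / 1000"
proof -
  have "(\<epsilon> / 1000) ^ 2 ^ (2 * k + 2) = \<epsilon> ^ 2 ^ (2 * k + 2) / 1000 ^ 2 ^ (2 * k + 2)"
    by (simp add: power_divide)
  also have "\<dots> \<le> \<epsilon> ^ 2 ^ (k + 1) / 1000 ^ 2 ^ (2 * k + 2)"
    using assms by (intro divide_right_mono power_decreasing power_increasing) auto
  also have "\<dots> \<le> \<epsilon> ^ 2 ^ (k + 1) / 1000"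
    using assms by (intro divide_left_mono) (auto intro: one_le_power order.trans[OF _ power_increasing[of 1]])
  finally show ?thesis .
qed

lemma real_lt_of_quadratic_bound:
  fixes E b :: real
  assumes E: "E > 0" and b: "b \<le> E / 1000"
    and bound: "real n ^ 2 * E \<le> real n * (real n - 1) * b + real n"
  shows "real n < 10 / E"
proof (cases "n = 0")
  case False
  then have n: "real n > 0"
    by simp
  have "real n * (real n * E) \<le> real n * (real n - 1) * b + real n"
    using bound by (simp add: power2_eq_square mult.assoc)
  also have "\<dots> \<le> real n * (real n - 1) * (E / 1000) + real n"
    using b n False by (simp add: mult_left_mono)
  also have "\<dots> \<le> real n * (real n * E / 1000 + 1)"
    using E n by (simp add: algebra_simps)
  finally have "real n * E \<le> real n * E / 1000 + 1"
    using n by simp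
  then have "real n * E < 10"
    by simp
  then show ?thesis
    using E by (simp add: pos_less_divide_eq)
qed (use E in simp)

theorem theorem32:
  fixes p k :: nat and d :: "nat \<Rightarrow> nat" and \<epsilon> :: real
    and f :: "(nat \<Rightarrow> nat \<Rightarrow> int) \<Rightarrow> complex"
    and n :: nat and \<mu> :: "nat \<Rightarrow> (nat \<Rightarrow> nat \<Rightarrow> int) \<Rightarrow> int"
  assumes "prime p"
    and "\<epsilon> > 0"
    and "\<forall>x\<in>prod_sp p k d. cmod (f x) \<le> 1"
    and "\<forall>i<n. \<mu> i \<in> spec_ml p k d \<epsilon> f"
    and "\<forall>i<n. \<forall>j<n. i \<noteq> j \<longrightarrow>
           cmod (bias p k d (form_diff p (\<mu> i) (\<mu> j))) \<le> (\<epsilon> / 1000) ^ (2 ^ (2 * k + 2))"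
  shows "int n < \<lceil>10 * (1 / \<epsilon>) ^ (2 ^ (k + 1))\<rceil>"
proof (cases "n = 0")
  case True
  then show ?thesis
    using assms(2) by simp
next
  case False
  have p: "p > 1"
    using assms(1) prime_gt_1_nat by blast
  have "\<epsilon> \<le> box_norm p k d (\<lambda>x. f x * omega_pow p (\<mu> 0 x))"
    using assms(4) False unfolding spec_ml_def by auto
  also have "\<dots> \<le> 1"
    using assms(3) by (intro box_norm_le_1) (simp add: norm_mult)
  finally have "\<epsilon> \<le> 1" .
  have "real n ^ 2 * \<epsilon> ^ 2 ^ (k + 1) \<le> real n * (real n - 1) * (\<epsilon> / 1000) ^ 2 ^ (2 * k + 2) + real n"
    using spec_ml_almost_orthogonal_count_bound[OF p _ assms(3-5)] assms(2) by simp
  then have "real n < 10 / \<epsilon> ^ 2 ^ (k + 1)"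
    using power_div_1000_le[OF assms(2) \<open>\<epsilon> \<le> 1\<close>] assms(2)
    by (intro real_lt_of_quadratic_bound) auto
  then show ?thesis
    by (simp add: less_ceiling_iff power_one_over)
qed

end
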